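(* Let $I\subset\mathbb R$ be an open interval, $f:I\to\mathbb R$ continuously differentiable, and $p^*\in I$ with $f(p^* )=0$ and $f'(p^* )\ne0$. Let $\eta\in(0,1)$ and $\zeta\in(\eta,1)$. Then there exists $\epsilon>0$ with the following property. Let $(p_n)_{n\ge0}$, $(F_n)_{n\ge0}$, $(F'_n)_{n\ge0}$ be real sequences with $F'_n\ne0$, $p_{n+1}=p_n-F_n/F'_n$ for all $n$, $|p_0-p^*|\le\epsilon$, and such that for every $n$ with $p_n\in I$, $$2|F_n-f(p_n)|+|\Delta p_n|\,|F'_n-f'(p_n)|\le\eta|F_n|,\qquad \Delta p_n:=p_{n+1}-p_n.$$ Then $|p_n-p^*|\le\epsilon$ and $|p_{n+1}-p^*|\le\zeta|p_n-p^*|$ for all $n\ge0$; in particular $p_n\to p^*$. *)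

theory Defs
  imports "HOL-Analysis.Analysis"
begin

end

theory Submission
  imports Defs
begin

text \<open>Near the root write \<open>f x = E (x - p\<^sup>*)\<close> with a secant slope \<open>E\<close>; by the mean value
theorem and continuity of \<open>f'\<close>, both \<open>E\<close> and \<open>f' x\<close> lie within \<open>\<delta>\<close> of \<open>s = f' p\<^sup>*\<close>.
The Newton update gives the exact identity
\<open>f' x (x' - p\<^sup>*) = (f' x - E)(x - p\<^sup>*) - (F - f x) - (F' - f' x)(x' - x)\<close>,
and the residual condition bounds the last two terms by \<open>\<eta> |f x| \<le> \<eta> (|s| + \<delta>) |x - p\<^sup>*|\<close>.
Hence \<open>(|s| - \<delta>) |x' - p\<^sup>*| \<le> (2\<delta> + \<eta> (|s| + \<delta>)) |x - p\<^sup>*|\<close>, a contraction by \<open>\<zeta>\<close>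
once \<open>\<delta>\<close> is small. A ball around \<open>p\<^sup>*\<close> on which these estimates hold is then invariant,
and the iterates converge geometrically.\<close>

lemma inexact_newton_step_contracts:
  fixes a x x' y D E F F' s \<delta> \<eta> \<zeta> :: real
  assumes secant: "y = E * (x - a)"
    and E: "\<bar>E - s\<bar> \<le> \<delta>" and D: "\<bar>D - s\<bar> \<le> \<delta>" and "\<delta> < \<bar>s\<bar>"
    and newton: "x' = x - F / F'" and "F' \<noteq> 0"
    and residual: "2 * \<bar>F - y\<bar> + \<bar>x' - x\<bar> * \<bar>F' - D\<bar> \<le> \<eta> * \<bar>F\<bar>"
    and "0 \<le> \<eta>" "\<eta> \<le> 1" "0 \<le> \<zeta>"
    and tolerance: "2 * \<delta> + \<eta> * (\<bar>s\<bar> + \<delta>) \<le> \<zeta> * (\<bar>s\<bar> - \<delta>)"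
  shows "\<bar>x' - a\<bar> \<le> \<zeta> * \<bar>x - a\<bar>"
proof -
  have "F = F' * (x - x')"
    using newton \<open>F' \<noteq> 0\<close> by (simp add: field_simps)
  then have identity: "D * (x' - a) = (D - E) * (x - a) - (F - y) - (F' - D) * (x' - x)"
    using secant by (simp add: algebra_simps)
  have "\<eta> * \<bar>F\<bar> \<le> \<eta> * \<bar>y\<bar> + \<eta> * \<bar>F - y\<bar>"
    using \<open>0 \<le> \<eta>\<close> abs_triangle_ineq[of y "F - y"] by (simp add: distrib_left[symmetric] mult_left_mono)
  moreover have "\<eta> * \<bar>F - y\<bar> \<le> \<bar>F - y\<bar>"
    using \<open>0 \<le> \<eta>\<close> \<open>\<eta> \<le> 1\<close> by (simp add: mult_left_le_one_le)
  ultimately have residual': "\<bar>F - y\<bar> + \<bar>F' - D\<bar> * \<bar>x' - x\<bar> \<le> \<eta> * \<bar>y\<bar>"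
    using residual by (simp add: mult.commute)
  have "\<bar>D - E\<bar> * \<bar>x - a\<bar> \<le> 2 * \<delta> * \<bar>x - a\<bar>"
    using D E by (intro mult_right_mono) auto
  moreover have "\<eta> * \<bar>y\<bar> \<le> \<eta> * ((\<bar>s\<bar> + \<delta>) * \<bar>x - a\<bar>)"
    using E \<open>0 \<le> \<eta>\<close> unfolding secant abs_mult by (intro mult_left_mono mult_right_mono) auto
  moreover have "\<bar>D\<bar> * \<bar>x' - a\<bar> \<le> \<bar>D - E\<bar> * \<bar>x - a\<bar> + \<bar>F - y\<bar> + \<bar>F' - D\<bar> * \<bar>x' - x\<bar>"
    unfolding abs_mult[symmetric] identity
    by (rule order_trans[OF abs_triangle_ineq4])
      (auto intro: order_trans[OF abs_triangle_ineq4] simp: abs_mult)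
  ultimately have "\<bar>D\<bar> * \<bar>x' - a\<bar> \<le> (2 * \<delta> + \<eta> * (\<bar>s\<bar> + \<delta>)) * \<bar>x - a\<bar>"
    using residual' by (simp add: algebra_simps)
  also have "\<dots> \<le> \<zeta> * (\<bar>s\<bar> - \<delta>) * \<bar>x - a\<bar>"
    using tolerance by (simp add: mult_right_mono)
  also have "\<dots> \<le> \<zeta> * \<bar>D\<bar> * \<bar>x - a\<bar>"
    using D \<open>0 \<le> \<zeta>\<close> by (intro mult_right_mono mult_left_mono) auto
  finally have "\<bar>D\<bar> * \<bar>x' - a\<bar> \<le> \<bar>D\<bar> * (\<zeta> * \<bar>x - a\<bar>)"
    by (simp add: algebra_simps)
  moreover have "0 < \<bar>D\<bar>"
    using D \<open>\<delta> < \<bar>s\<bar>\<close> by linarith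
  ultimately show ?thesis
    by (simp add: mult_le_cancel_left_pos)
qed

lemma secant_slope_near:
  fixes f f' :: "real \<Rightarrow> real"
  assumes "\<bar>x - a\<bar> \<le> r"
    and deriv: "\<And>z. \<bar>z - a\<bar> \<le> r \<Longrightarrow> (f has_real_derivative f' z) (at z)"
    and close: "\<And>z. \<bar>z - a\<bar> \<le> r \<Longrightarrow> \<bar>f' z - f' a\<bar> \<le> \<delta>"
  shows "\<exists>E. f x - f a = E * (x - a) \<and> \<bar>E - f' a\<bar> \<le> \<delta>"
proof -
  consider "x = a" | "a < x" | "x < a" by linarith
  then show ?thesis
  proof cases
    case 1
    then show ?thesis using close[of a] assms(1) by (intro exI[of _ "f' a"]) auto
  next
    case 2
    then obtain z where "a < z" "z < x" "f x - f a = (x - a) * f' z"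
      using MVT2[of a x f f'] deriv assms(1) by force
    then show ?thesis using close[of z] assms(1) by (intro exI[of _ "f' z"]) auto
  next
    case 3
    then obtain z where "x < z" "z < a" "f a - f x = (a - x) * f' z"
      using MVT2[of x a f f'] deriv assms(1) by force
    then show ?thesis using close[of z] assms(1) by (intro exI[of _ "f' z"]) (auto simp: algebra_simps)
  qed
qed

lemma continuous_on_open_obtain_neighbourhood:
  fixes g :: "real \<Rightarrow> real"
  assumes "open I" "continuous_on I g" "a \<in> I" "0 < \<delta>"
  obtains \<epsilon> where "0 < \<epsilon>" "\<And>x. \<bar>x - a\<bar> \<le> \<epsilon> \<Longrightarrow> x \<in> I \<and> \<bar>g x - g a\<bar> < \<delta>"
proof -
  obtain d where "0 < d" and d: "\<And>x. x \<in> I \<Longrightarrow> dist x a < d \<Longrightarrow> dist (g x) (g a) < \<delta>"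
    using assms unfolding continuous_on_iff by metis
  obtain r where "0 < r" "ball a r \<subseteq> I"
    using assms open_contains_ball by blast
  show ?thesis
  proof (rule that[of "min d r / 2"])
    fix x assume "\<bar>x - a\<bar> \<le> min d r / 2"
    with \<open>0 < d\<close> \<open>0 < r\<close> have "dist x a < d" "x \<in> ball a r"
      by (auto simp: dist_real_def abs_minus_commute)
    then show "x \<in> I \<and> \<bar>g x - g a\<bar> < \<delta>"
      using d \<open>ball a r \<subseteq> I\<close> by (auto simp: dist_real_def)
  qed (use \<open>0 < d\<close> \<open>0 < r\<close> in auto)
qed

lemma newton_tolerance_exists:
  fixes c \<eta> \<zeta> :: real
  assumes "0 < c" "0 < \<eta>" "\<eta> < \<zeta>"
  obtains \<delta> where "0 < \<delta>" "\<delta> < c" "2 * \<delta> + \<eta> * (c + \<delta>) \<le> \<zeta> * (c - \<delta>)"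
proof
  define \<delta> where "\<delta> = (\<zeta> - \<eta>) * c / (2 + \<eta> + \<zeta>)"
  show "0 < \<delta>"
    using assms by (simp add: \<delta>_def)
  have "(\<zeta> - \<eta>) * c < (2 + \<eta> + \<zeta>) * c"
    using assms by (intro mult_strict_right_mono) auto
  then show "\<delta> < c"
    using assms by (simp add: \<delta>_def divide_less_eq mult.commute)
  have "\<delta> * (2 + \<eta> + \<zeta>) = (\<zeta> - \<eta>) * c"
    using assms by (simp add: \<delta>_def)
  then show "2 * \<delta> + \<eta> * (c + \<delta>) \<le> \<zeta> * (c - \<delta>)"
    by (simp add: algebra_simps)
qed

lemma contracting_orbit_power_bound:
  fixes p :: "nat \<Rightarrow> real"
  assumes step: "\<And>n. \<bar>p n - a\<bar> \<le> \<epsilon> \<Longrightarrow> \<bar>p (Suc n) - a\<bar> \<le> \<zeta> * \<bar>p n - a\<bar>"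
    and "\<bar>p 0 - a\<bar> \<le> \<epsilon>" "0 \<le> \<zeta>" "\<zeta> \<le> 1"
  shows "\<bar>p n - a\<bar> \<le> \<zeta> ^ n * \<epsilon>"
proof (induction n)
  case 0
  then show ?case using assms by simp
next
  case (Suc n)
  have "0 \<le> \<epsilon>" using \<open>\<bar>p 0 - a\<bar> \<le> \<epsilon>\<close> by linarith
  then have "\<zeta> ^ n * \<epsilon> \<le> \<epsilon>"
    using assms by (simp add: power_le_one mult_left_le_one_le)
  then have "\<bar>p (Suc n) - a\<bar> \<le> \<zeta> * \<bar>p n - a\<bar>"
    using Suc by (intro step) linarith
  also have "\<dots> \<le> \<zeta> * (\<zeta> ^ n * \<epsilon>)"
    using Suc \<open>0 \<le> \<zeta>\<close> by (intro mult_left_mono)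
  finally show ?case by simp
qed

lemma contracting_orbit_converges:
  fixes p :: "nat \<Rightarrow> real"
  assumes step: "\<And>n. \<bar>p n - a\<bar> \<le> \<epsilon> \<Longrightarrow> \<bar>p (Suc n) - a\<bar> \<le> \<zeta> * \<bar>p n - a\<bar>"
    and "\<bar>p 0 - a\<bar> \<le> \<epsilon>" "0 \<le> \<zeta>" "\<zeta> < 1"
  shows "(\<forall>n. \<bar>p n - a\<bar> \<le> \<epsilon> \<and> \<bar>p (Suc n) - a\<bar> \<le> \<zeta> * \<bar>p n - a\<bar>) \<and> p \<longlonglongrightarrow> a"
proof -
  have bound: "\<bar>p n - a\<bar> \<le> \<zeta> ^ n * \<epsilon>" for n
    using contracting_orbit_power_bound[of p a \<epsilon> \<zeta>, OF step] assms by auto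
  have "0 \<le> \<epsilon>" using \<open>\<bar>p 0 - a\<bar> \<le> \<epsilon>\<close> by linarith
  then have "\<zeta> ^ n * \<epsilon> \<le> \<epsilon>" for n
    using assms by (simp add: power_le_one mult_left_le_one_le)
  moreover have "(\<lambda>n. \<zeta> ^ n * \<epsilon>) \<longlonglongrightarrow> 0"
    using assms by (intro tendsto_mult_left_zero LIMSEQ_power_zero) auto
  then have "(\<lambda>n. p n - a) \<longlonglongrightarrow> 0"
    by (rule Lim_null_comparison[rotated]) (use bound in auto)
  ultimately show ?thesis
    using bound step order_trans by (blast intro: LIM_zero_cancel)
qed

theorem lemma4:
  fixes I :: "real set" and f f' :: "real \<Rightarrow> real" and pstar \<eta> \<zeta> :: real
  assumes "open I" and "is_interval I"
    and "\<And>x. x \<in> I \<Longrightarrow> (f has_real_derivative f' x) (at x)"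
    and "continuous_on I f'"
    and "pstar \<in> I" and "f pstar = 0" and "f' pstar \<noteq> 0"
    and "0 < \<eta>" and "\<eta> < 1" and "\<eta> < \<zeta>" and "\<zeta> < 1"
  shows "\<exists>\<epsilon>>0. \<forall>(p :: nat \<Rightarrow> real) (F :: nat \<Rightarrow> real) (F' :: nat \<Rightarrow> real).
           (\<forall>n. F' n \<noteq> 0) \<and>
           (\<forall>n. p (Suc n) = p n - F n / F' n) \<and>
           \<bar>p 0 - pstar\<bar> \<le> \<epsilon> \<and>
           (\<forall>n. p n \<in> I \<longrightarrow>
              2 * \<bar>F n - f (p n)\<bar> + \<bar>p (Suc n) - p n\<bar> * \<bar>F' n - f' (p n)\<bar> \<le> \<eta> * \<bar>F n\<bar>)
           \<longrightarrow> (\<forall>n. \<bar>p n - pstar\<bar> \<le> \<epsilon> \<and> \<bar>p (Suc n) - pstar\<bar> \<le> \<zeta> * \<bar>p n - pstar\<bar>)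
               \<and> p \<longlonglongrightarrow> pstar"
proof -
  obtain \<delta> where "0 < \<delta>" "\<delta> < \<bar>f' pstar\<bar>"
    and tolerance: "2 * \<delta> + \<eta> * (\<bar>f' pstar\<bar> + \<delta>) \<le> \<zeta> * (\<bar>f' pstar\<bar> - \<delta>)"
    using newton_tolerance_exists[of "\<bar>f' pstar\<bar>" \<eta> \<zeta>] assms by auto
  obtain \<epsilon> where "0 < \<epsilon>" and near: "\<And>x. \<bar>x - pstar\<bar> \<le> \<epsilon> \<Longrightarrow> x \<in> I \<and> \<bar>f' x - f' pstar\<bar> < \<delta>"
    using continuous_on_open_obtain_neighbourhood[of I f' pstar \<delta>] assms \<open>0 < \<delta>\<close> by auto
  have "(\<forall>n. \<bar>p n - pstar\<bar> \<le> \<epsilon> \<and> \<bar>p (Suc n) - pstar\<bar> \<le> \<zeta> * \<bar>p n - pstar\<bar>) \<and> p \<longlonglongrightarrow> pstar"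
    if "\<forall>n. F' n \<noteq> 0" "\<forall>n. p (Suc n) = p n - F n / F' n" "\<bar>p 0 - pstar\<bar> \<le> \<epsilon>"
      and residual: "\<forall>n. p n \<in> I \<longrightarrow>
        2 * \<bar>F n - f (p n)\<bar> + \<bar>p (Suc n) - p n\<bar> * \<bar>F' n - f' (p n)\<bar> \<le> \<eta> * \<bar>F n\<bar>"
    for p F F' :: "nat \<Rightarrow> real"
  proof -
    have step: "\<bar>p (Suc n) - pstar\<bar> \<le> \<zeta> * \<bar>p n - pstar\<bar>" if close: "\<bar>p n - pstar\<bar> \<le> \<epsilon>" for n
    proof -
      obtain E where "f (p n) = E * (p n - pstar)" "\<bar>E - f' pstar\<bar> \<le> \<delta>"
        using secant_slope_near[OF close, of f f' \<delta>] near assms(3,6) by (auto simp: less_imp_le)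
      with near[OF close] show ?thesis
        using residual \<open>\<delta> < \<bar>f' pstar\<bar>\<close> tolerance assms \<open>\<forall>n. F' n \<noteq> 0\<close> \<open>\<forall>n. p (Suc n) = p n - F n / F' n\<close>
        by (intro inexact_newton_step_contracts[where s = "f' pstar" and D = "f' (p n)"
              and y = "f (p n)" and F = "F n" and F' = "F' n" and \<eta> = \<eta>]) auto
    qed
    then show ?thesis
      using \<open>\<bar>p 0 - pstar\<bar> \<le> \<epsilon>\<close> assms by (intro contracting_orbit_converges) auto
  qed
  with \<open>0 < \<epsilon>\<close> show ?thesis by blast
qed

end
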